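(* Let $H$ be a $d$-degenerate $r$-uniform hypergraph on $n$ vertices, let $\{c_v\}$ be a random local $k$-partition of $H$, and run the greedy procedure described in the context on $H$ and $\{c_v\}$. For $i\in[n]$ and $j\in[k]$ let $X_{ij}$ be the indicator of the event $j\in L(v_i)$, and let $Y_{ij}=1-X_{ij}$. Then: (i) for all $i\in[n]$ and $j\in[k]$, $\mathbb{E}[X_{ij}]\ge (1-1/k^r)^d$; (ii) for each $i\in[n]$, the variables $(Y_{ij})_{j\in[k]}$ are negatively correlated, i.e. for every $J\subseteq[k]$, $\mathbb{P}\big[\bigcap_{j\in J}\{Y_{ij}=1\}\big]\le\prod_{j\in J}\mathbb{P}[Y_{ij}=1]$.
   Context: For a vertex $v$, $E(v)$ is the set of edges containing $v$. A local $k$-partition of $H$ is a collection $\{c_v\}$ of maps $c_v:E(v)\to\{1,\dots,k\}$. A random local $k$-partition is obtained by choosing, for each edge $e=\{v_1,\dots,v_r\}$, the tuple $(c_{v_1}(e),\dots,c_{v_r}(e))$ uniformly at random from $[k]^r$, independently over edges. $H$ is $d$-degenerate if its vertices can be ordered $v_1,\dots,v_n$ so that each back degree $d_i^-$ (the degree of $v_i$ in the subhypergraph induced by $\{v_1,\dots,v_i\}$) is at most $d$. Greedy procedure: fix such an ordering; set $\varphi(v_1)=1$ (and $L(v_1)=[k]$); for $i=2,\dots,n$ in turn, let $L(v_i)=[k]\setminus\{c_{v_i}(e): e\ni v_i,\ e\subseteq\{v_1,\dots,v_i\},\ \varphi(u)=c_u(e)\text{ for all }u\in e\setminus\{v_i\}\}$,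 and set $\varphi(v_i)$ to be the smallest element of $L(v_i)$ if $L(v_i)\neq\emptyset$, and $\varphi(v_i)=1$ otherwise. *)

theory Defs
  imports "HOL-Probability.Probability"
begin

text \<open>Hypergraphs on the vertex set {0..<n}; vertex i plays the role of v_(i+1)
  in the fixed degeneracy ordering v_1,...,v_n. Edges are sets of vertices.\<close>

definition r_uniform_hypergraph :: "nat \<Rightarrow> nat \<Rightarrow> nat set set \<Rightarrow> bool" where
  "r_uniform_hypergraph n r E \<longleftrightarrow> E \<subseteq> Pow {0..<n} \<and> (\<forall>e\<in>E. card e = r)"

definition back_degree :: "nat set set \<Rightarrow> nat \<Rightarrow> nat" where
  "back_degree E i = card {e \<in> E. i \<in> e \<and> e \<subseteq> {0..i}}"

definition degeneracy_ordering :: "nat \<Rightarrow> nat set set \<Rightarrow> nat \<Rightarrow> bool" where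
  "degeneracy_ordering n E d \<longleftrightarrow> (\<forall>i<n. back_degree E i \<le> d)"

text \<open>Local k-partitions: c e v is c_v(e) for v in e, e in E (extensional elsewhere).\<close>
definition local_partitions :: "nat set set \<Rightarrow> nat \<Rightarrow> (nat set \<Rightarrow> nat \<Rightarrow> nat) set" where
  "local_partitions E k = PiE E (\<lambda>e. e \<rightarrow>\<^sub>E {1..k})"

text \<open>Random local k-partition: uniform over all local k-partitions, i.e. the tuples
  (c_v(e))_{v in e} are independent uniform over [k]^r for different edges.\<close>
definition random_local_partition :: "nat set set \<Rightarrow> nat \<Rightarrow> (nat set \<Rightarrow> nat \<Rightarrow> nat) pmf" where
  "random_local_partition E k = pmf_of_set (local_partitions E k)"

definition avail :: "nat set set \<Rightarrow> nat \<Rightarrow> (nat set \<Rightarrow> nat \<Rightarrow> nat) \<Rightarrow> (nat \<Rightarrow> nat) \<Rightarrow> nat \<Rightarrow> nat set" where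
  "avail E k c phi i = {1..k} - {c e i | e. e \<in> E \<and> i \<in> e \<and> e \<subseteq> {0..i} \<and> (\<forall>u \<in> e - {i}. phi u = c e u)}"

text \<open>greedy_phi E k c i agrees with the greedy colouring phi on the vertices 0..i.\<close>
fun greedy_phi :: "nat set set \<Rightarrow> nat \<Rightarrow> (nat set \<Rightarrow> nat \<Rightarrow> nat) \<Rightarrow> nat \<Rightarrow> (nat \<Rightarrow> nat)" where
  "greedy_phi E k c 0 = (\<lambda>v. 1)"
| "greedy_phi E k c (Suc i) =
     (let phi = greedy_phi E k c i; L = avail E k c phi (Suc i)
      in phi(Suc i := (if L \<noteq> {} then Min L else 1)))"

definition greedy_L :: "nat set set \<Rightarrow> nat \<Rightarrow> (nat set \<Rightarrow> nat \<Rightarrow> nat) \<Rightarrow> nat \<Rightarrow> nat set" where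
  "greedy_L E k c i = (if i = 0 then {1..k} else avail E k c (greedy_phi E k c (i - 1)) i)"

end

theory Submission
  imports Defs
begin

text \<open>Fix a vertex v = Suc i and let B be its set of back edges. An edge e \<in> B removes the colour
  c_v(e) from L(v) iff c_u(e) = \<phi>(u) for all other u \<in> e; call this colour the one blocked by e
  (and 0, which is no colour, if e blocks nothing), so that L(v) is [k] minus the blocked colours.
  The colours \<phi> of the earlier vertices depend only on the edges outside B, and given those, the
  colours blocked by the edges of B are independent and each equals any fixed j \<in> [k] with
  probability 1/k^r. Hence P(j \<in> L(v)) = (1 - 1/k^r)^|B| with |B| \<le> d, which gives (i). For (ii)
  it remains to see that, for independent random values with equal point masses on [k], the events
  that a colour j is hit are negatively correlated; by induction on the number of values this
  reduces to the positive correlation of hitting every colour of a set S with missing j.\<close>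

lemma measure_pair_pmf_Times:
  "measure_pmf.prob (pair_pmf M N) (A \<times> B) = measure_pmf.prob M A * measure_pmf.prob N B"
proof -
  have "measure_pmf.prob (pair_pmf M N) (A \<times> B) =
        measure_pmf.prob (pair_pmf M N) ((A \<inter> set_pmf M) \<times> (B \<inter> set_pmf N))"
    by (subst measure_Int_set_pmf[symmetric]) (simp add: Times_Int_Times)
  also have "\<dots> = measure_pmf.prob M (A \<inter> set_pmf M) * measure_pmf.prob N (B \<inter> set_pmf N)"
    by (rule measure_pmf_prob_product) (auto intro: countable_subset)
  finally show ?thesis by (simp add: measure_Int_set_pmf)
qed

lemma measure_bind_pmf_eq_expectation:
  "measure_pmf.prob (bind_pmf M N) A = measure_pmf.expectation M (\<lambda>x. measure_pmf.prob (N x) A)"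
proof -
  have "ennreal (measure_pmf.prob (bind_pmf M N) A) = (\<integral>\<^sup>+x. ennreal (measure_pmf.prob (N x) A) \<partial>M)"
    by (simp flip: measure_pmf.emeasure_eq_measure)
  also have "\<dots> = ennreal (measure_pmf.expectation M (\<lambda>x. measure_pmf.prob (N x) A))"
    by (intro nn_integral_eq_integral measure_pmf.integrable_const_bound[where B=1]) auto
  finally show ?thesis by (simp add: integral_nonneg)
qed

lemma measure_bind_pmf_le:
  assumes "\<And>x. x \<in> set_pmf M \<Longrightarrow> measure_pmf.prob (N x) A \<le> q"
  shows "measure_pmf.prob (bind_pmf M N) A \<le> q"
  unfolding measure_bind_pmf_eq_expectation
  by (intro measure_pmf.integral_le_const measure_pmf.integrable_const_bound[where B=1])
     (auto simp: AE_measure_pmf_iff assms)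

lemma measure_bind_pmf_const:
  assumes "\<And>x. x \<in> set_pmf M \<Longrightarrow> measure_pmf.prob (N x) A = q"
  shows "measure_pmf.prob (bind_pmf M N) A = q"
proof -
  have "measure_pmf.expectation M (\<lambda>x. measure_pmf.prob (N x) A) = measure_pmf.expectation M (\<lambda>_. q)"
    by (intro integral_cong_AE) (auto simp: AE_measure_pmf_iff assms)
  then show ?thesis by (simp add: measure_bind_pmf_eq_expectation)
qed

lemma map_pmf_pair_pmf: "map_pmf h (pair_pmf A B) = bind_pmf A (\<lambda>a. map_pmf (\<lambda>b. h (a, b)) B)"
  by (simp add: pair_pmf_def map_bind_pmf map_pmf_def bind_assoc_pmf bind_return_pmf)

lemma Pi_pmf_map_family:
  assumes "finite A"
  shows "Pi_pmf A dflt (\<lambda>x. map_pmf (f x) (p x)) =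
           map_pmf (\<lambda>g x. if x \<in> A then f x (g x) else dflt) (Pi_pmf A dflt' p)"
proof -
  have "Pi_pmf A dflt (\<lambda>x. map_pmf (f x) (p x)) = Pi_pmf A dflt (\<lambda>x. bind_pmf (p x) (\<lambda>y. return_pmf (f x y)))"
    by (simp add: map_pmf_def)
  also have "\<dots> = bind_pmf (Pi_pmf A dflt' p) (\<lambda>g. Pi_pmf A dflt (\<lambda>x. return_pmf (f x (g x))))"
    using assms by (rule Pi_pmf_bind)
  also have "\<dots> = map_pmf (\<lambda>g x. if x \<in> A then f x (g x) else dflt) (Pi_pmf A dflt' p)"
    using assms by (simp add: map_pmf_def)
  finally show ?thesis .
qed

definition hit_miss_prob :: "'a set \<Rightarrow> 'b \<Rightarrow> ('a \<Rightarrow> 'b pmf) \<Rightarrow> 'b set \<Rightarrow> 'b set \<Rightarrow> real" where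
  "hit_miss_prob A dflt D S T =
     measure_pmf.prob (Pi_pmf A dflt D) {f. S \<subseteq> f ` A \<and> T \<inter> f ` A = {}}"

lemma hit_miss_prob_nonneg: "0 \<le> hit_miss_prob A dflt D S T"
  by (simp add: hit_miss_prob_def)

lemma hit_miss_prob_empty_domain: "hit_miss_prob {} dflt D S T = (if S = {} then 1 else 0)"
  by (simp add: hit_miss_prob_def)

lemma hit_miss_prob_empty_empty: "hit_miss_prob A dflt D {} {} = 1"
  by (simp add: hit_miss_prob_def)

lemma hit_miss_prob_antimono: "S' \<subseteq> S \<Longrightarrow> hit_miss_prob A dflt D S T \<le> hit_miss_prob A dflt D S' T"
  unfolding hit_miss_prob_def by (intro measure_pmf.finite_measure_mono) auto

lemma hit_miss_prob_split:
  "hit_miss_prob A dflt D S T = hit_miss_prob A dflt D (insert j S) T + hit_miss_prob A dflt D S (insert j T)"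
proof -
  have "{f. S \<subseteq> f ` A \<and> T \<inter> f ` A = {}} =
        {f. insert j S \<subseteq> f ` A \<and> T \<inter> f ` A = {}} \<union> {f. S \<subseteq> f ` A \<and> insert j T \<inter> f ` A = {}}"
    by auto
  then show ?thesis
    unfolding hit_miss_prob_def by (simp only:) (rule measure_pmf.finite_measure_Union, auto)
qed

text \<open>Condition on the value of the new coordinate x: it either hits some l \<in> S, or it lies
  outside S \<union> T, or it hits T (which contributes nothing).\<close>
lemma hit_miss_prob_insert:
  assumes "finite A" "x \<notin> A" "finite S" "finite T" "S \<inter> T = {}"
    and mass: "\<And>l. l \<in> S \<union> T \<Longrightarrow> pmf (D x) l = p"
  shows "hit_miss_prob (insert x A) dflt D S T =
           (\<Sum>l\<in>S. p * hit_miss_prob A dflt D (S - {l}) T)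
           + (1 - real (card S + card T) * p) * hit_miss_prob A dflt D S T"
proof -
  let ?M = "pair_pmf (D x) (Pi_pmf A dflt D)"
  have "measure_pmf.prob (D x) (S \<union> T) = real (card S + card T) * p"
    using assms by (simp add: measure_measure_pmf_finite card_Un_disjoint)
  then have outside: "measure_pmf.prob (D x) (-(S \<union> T)) = 1 - real (card S + card T) * p"
    using measure_pmf.prob_compl[of "S \<union> T" "D x"] by (simp add: Compl_eq_Diff_UNIV)
  define F where "F l = {f. S - {l} \<subseteq> f ` A \<and> T \<inter> f ` A = {}}" for l
  define G where "G = {f. S \<subseteq> f ` A \<and> T \<inter> f ` A = {}}"
  have img: "f(x := y) ` insert x A = insert y (f ` A)" for f :: "'a \<Rightarrow> 'b" and y
    using \<open>x \<notin> A\<close> by auto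
  have "(\<lambda>(y, f). f(x := y)) -` {f. S \<subseteq> f ` insert x A \<and> T \<inter> f ` insert x A = {}}
          = {(y, f). S \<subseteq> insert y (f ` A) \<and> T \<inter> insert y (f ` A) = {}}"
    by (intro set_eqI) (simp only: split_paired_all vimage_def mem_Collect_eq case_prod_conv img)
  also have "\<dots> = (\<Union>l\<in>S. {l} \<times> F l) \<union> (-(S \<union> T)) \<times> G"
    unfolding F_def G_def using \<open>S \<inter> T = {}\<close> by auto
  finally have "hit_miss_prob (insert x A) dflt D S T =
      measure_pmf.prob ?M ((\<Union>l\<in>S. {l} \<times> F l) \<union> (-(S \<union> T)) \<times> G)"
    unfolding hit_miss_prob_def using assms(1,2) by (simp add: Pi_pmf_insert)
  also have "\<dots> = measure_pmf.prob ?M (\<Union>l\<in>S. {l} \<times> F l) + measure_pmf.prob ?M ((-(S \<union> T)) \<times> G)"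
    by (rule measure_pmf.finite_measure_Union) auto
  also have "measure_pmf.prob ?M (\<Union>l\<in>S. {l} \<times> F l) = (\<Sum>l\<in>S. measure_pmf.prob ?M ({l} \<times> F l))"
    using assms(3)
    by (intro measure_pmf.finite_measure_finite_Union) (auto simp: disjoint_family_on_def)
  also have "(\<Sum>l\<in>S. measure_pmf.prob ?M ({l} \<times> F l)) + measure_pmf.prob ?M ((-(S \<union> T)) \<times> G)
      = (\<Sum>l\<in>S. p * hit_miss_prob A dflt D (S - {l}) T)
           + (1 - real (card S + card T) * p) * hit_miss_prob A dflt D S T"
    unfolding measure_pair_pmf_Times measure_pmf_single outside hit_miss_prob_def F_def G_def
    by (simp add: mass)
  finally show ?thesis .
qed

lemma hit_miss_prob_miss_one:
  assumes "finite A" "\<And>x. x \<in> A \<Longrightarrow> pmf (D x) j = p"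
  shows "hit_miss_prob A dflt D {} {j} = (1 - p) ^ card A"
  using assms
proof (induction A rule: finite_induct)
  case empty
  then show ?case by (simp add: hit_miss_prob_empty_domain)
next
  case (insert x A)
  then show ?case using hit_miss_prob_insert[of A x "{}" "{j}" D p dflt] by simp
qed

lemma hit_miss_prob_hit_one:
  assumes "finite A" "\<And>x. x \<in> A \<Longrightarrow> pmf (D x) j = p"
  shows "hit_miss_prob A dflt D {j} {} = 1 - (1 - p) ^ card A"
  using hit_miss_prob_split[of A dflt D "{}" "{}" j] hit_miss_prob_miss_one[OF assms]
  by (simp add: hit_miss_prob_empty_empty)

text \<open>Expanding both sides along the new coordinate, the left side becomes an expression that the
  induction hypothesis bounds termwise by the right side, minus p^2 times a quantity that is
  nonnegative by antitonicity in S.\<close>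
lemma hit_miss_prob_hit_miss_ge:
  assumes "finite A" "finite S" "j \<notin> S"
    and mass: "\<And>x l. x \<in> A \<Longrightarrow> l \<in> insert j S \<Longrightarrow> pmf (D x) l = p"
  shows "hit_miss_prob A dflt D S {} * hit_miss_prob A dflt D {} {j} \<le> hit_miss_prob A dflt D S {j}"
  using assms
proof (induction A arbitrary: S rule: finite_induct)
  case empty
  then show ?case by (simp add: hit_miss_prob_empty_domain)
next
  case (insert x A)
  let ?q = "hit_miss_prob A dflt D"
  let ?s = "real (card S)"
  have massx: "pmf (D x) l = p" if "l \<in> insert j S" for l
    using insert.prems(3) that by simp
  have "0 \<le> p" using massx[of j] by (metis insertI1 pmf_nonneg)
  have "?s * p + p = measure_pmf.prob (D x) (insert j S)"
    using insert.prems massx by (simp add: measure_measure_pmf_finite algebra_simps)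
  then have "0 \<le> 1 - (1 + ?s) * p"
    using measure_pmf.prob_le_1[of "D x" "insert j S"] by (simp add: algebra_simps)
  have IH: "?q S' {} * ?q {} {j} \<le> ?q S' {j}" if "S' \<subseteq> S" for S'
    using insert that by (intro insert.IH) (auto intro: finite_subset)
  have "?s * ?q S {} \<le> (\<Sum>l\<in>S. ?q (S - {l}) {})"
    using sum_mono[of S "\<lambda>_. ?q S {}" "\<lambda>l. ?q (S - {l}) {}"] by (simp add: hit_miss_prob_antimono)
  then have "(p * (\<Sum>l\<in>S. ?q (S - {l}) {}) + (1 - ?s * p) * ?q S {}) * ((1 - p) * ?q {} {j})
      = p * ((\<Sum>l\<in>S. ?q (S - {l}) {}) * ?q {} {j}) + (1 - (1 + ?s) * p) * (?q S {} * ?q {} {j})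
        - p^2 * ?q {} {j} * ((\<Sum>l\<in>S. ?q (S - {l}) {}) - ?s * ?q S {})"
    by (simp add: algebra_simps power2_eq_square)
  also have "\<dots> \<le> p * (\<Sum>l\<in>S. ?q (S - {l}) {} * ?q {} {j}) + (1 - (1 + ?s) * p) * (?q S {} * ?q {} {j})"
    using \<open>?s * ?q S {} \<le> _\<close> hit_miss_prob_nonneg[of A dflt D "{}" "{j}"]
    by (simp add: sum_distrib_right)
  also have "\<dots> \<le> p * (\<Sum>l\<in>S. ?q (S - {l}) {j}) + (1 - (1 + ?s) * p) * ?q S {j}"
    using \<open>0 \<le> p\<close> \<open>0 \<le> 1 - (1 + ?s) * p\<close> IH
    by (intro add_mono mult_left_mono sum_mono) auto
  finally show ?case
    using hit_miss_prob_insert[of A x S "{}" D p dflt] hit_miss_prob_insert[of A x "{}" "{j}" D p dflt]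
      hit_miss_prob_insert[of A x S "{j}" D p dflt] insert.hyps insert.prems massx
    by (simp add: sum_distrib_left)
qed

lemma hit_miss_prob_negatively_correlated:
  assumes "finite A" "finite J" "\<And>x l. x \<in> A \<Longrightarrow> l \<in> J \<Longrightarrow> pmf (D x) l = p"
  shows "hit_miss_prob A dflt D J {} \<le> (\<Prod>j\<in>J. hit_miss_prob A dflt D {j} {})"
  using assms(2,3)
proof (induction J rule: finite_induct)
  case empty
  then show ?case by (simp add: hit_miss_prob_empty_empty)
next
  case (insert j S)
  let ?q = "hit_miss_prob A dflt D"
  have "?q S {} * ?q {} {j} \<le> ?q S {j}"
    using insert by (intro hit_miss_prob_hit_miss_ge[OF \<open>finite A\<close>]) auto
  moreover have "?q S {} = ?q (insert j S) {} + ?q S {j}"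
    using hit_miss_prob_split[of A dflt D S "{}" j] by simp
  moreover have "?q {j} {} = 1 - ?q {} {j}"
    using hit_miss_prob_split[of A dflt D "{}" "{}" j] by (simp add: hit_miss_prob_empty_empty)
  ultimately have "?q (insert j S) {} \<le> ?q S {} * ?q {j} {}"
    by (simp add: right_diff_distrib)
  also have "\<dots> \<le> (\<Prod>j\<in>S. ?q {j} {}) * ?q {j} {}"
    using insert by (intro mult_right_mono hit_miss_prob_nonneg) auto
  finally show ?case
    using insert by (simp add: mult.commute)
qed

definition back_edges :: "nat set set \<Rightarrow> nat \<Rightarrow> nat set set" where
  "back_edges E i = {e \<in> E. i \<in> e \<and> e \<subseteq> {0..i}}"

lemma back_degree_eq_card: "back_degree E i = card (back_edges E i)"
  by (simp add: back_degree_def back_edges_def)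

lemma r_uniform_hypergraph_finite:
  assumes "r_uniform_hypergraph n r E"
  shows "finite E" and "\<And>e. e \<in> E \<Longrightarrow> finite e"
  using assms finite_subset by (auto simp: r_uniform_hypergraph_def)

definition blocked_colour :: "(nat \<Rightarrow> nat) \<Rightarrow> nat \<Rightarrow> nat set \<Rightarrow> (nat \<Rightarrow> nat) \<Rightarrow> nat" where
  "blocked_colour phi i e x = (if \<forall>u\<in>e - {i}. phi u = x u then x i else 0)"

lemma avail_subset: "avail E k c phi i \<subseteq> {1..k}"
  by (auto simp: avail_def)

lemma greedy_phi_in_colours:
  assumes "0 < k"
  shows "greedy_phi E k c m u \<in> {1..k}"
proof (induction m arbitrary: u)
  case 0
  then show ?case using assms by simp
next
  case (Suc m)
  let ?L = "avail E k c (greedy_phi E k c m) (Suc m)"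
  have "finite ?L"
    by (rule finite_subset[OF avail_subset]) simp
  then have "?L \<noteq> {} \<Longrightarrow> Min ?L \<in> {1..k}"
    using Min_in subsetD[OF avail_subset] by metis
  then show ?case
    using Suc.IH assms by (simp add: Let_def)
qed

lemma avail_cong:
  assumes "\<And>e. e \<in> E \<Longrightarrow> e \<subseteq> {0..i} \<Longrightarrow> c e = c' e"
  shows "avail E k c phi i = avail E k c' phi i"
proof -
  have "{c e i |e. e \<in> E \<and> i \<in> e \<and> e \<subseteq> {0..i} \<and> (\<forall>u\<in>e - {i}. phi u = c e u)}
      = {c' e i |e. e \<in> E \<and> i \<in> e \<and> e \<subseteq> {0..i} \<and> (\<forall>u\<in>e - {i}. phi u = c' e u)}"
    using assms by (metis (no_types, lifting))
  then show ?thesis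
    by (simp add: avail_def)
qed

lemma greedy_phi_cong:
  assumes "\<And>e. e \<in> E \<Longrightarrow> e \<subseteq> {0..m} \<Longrightarrow> c e = c' e"
  shows "greedy_phi E k c m = greedy_phi E k c' m"
  using assms
proof (induction m)
  case 0
  then show ?case by simp
next
  case (Suc m)
  have "greedy_phi E k c m = greedy_phi E k c' m"
    by (intro Suc.IH Suc.prems) auto
  moreover have "avail E k c phi (Suc m) = avail E k c' phi (Suc m)" for phi
    using Suc.prems by (rule avail_cong)
  ultimately show ?case
    by (simp add: Let_def)
qed

lemma greedy_L_Suc:
  "greedy_L E k c (Suc i) =
     {1..k} - (\<lambda>e. blocked_colour (greedy_phi E k c i) (Suc i) e (c e)) ` back_edges E (Suc i)"
  by (auto simp: greedy_L_def avail_def blocked_colour_def back_edges_def)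

lemma random_local_partition_eq_Pi_pmf:
  assumes "finite E" "\<And>e. e \<in> E \<Longrightarrow> finite e" "0 < k"
  shows "random_local_partition E k = Pi_pmf E undefined (\<lambda>e. pmf_of_set (e \<rightarrow>\<^sub>E {1..k}))"
proof -
  have "PiE_dflt E undefined (\<lambda>e. e \<rightarrow>\<^sub>E {1..k}) = local_partitions E k"
    by (auto simp: PiE_dflt_def local_partitions_def PiE_def extensional_def Pi_def)
  moreover have "Pi_pmf E undefined (\<lambda>e. pmf_of_set (e \<rightarrow>\<^sub>E {1..k})) =
      pmf_of_set (PiE_dflt E undefined (\<lambda>e. e \<rightarrow>\<^sub>E {1..k}))"
    using assms by (intro Pi_pmf_of_set) (auto simp: PiE_eq_empty_iff finite_PiE)
  ultimately show ?thesis
    by (simp add: random_local_partition_def)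
qed

text \<open>Given the colours phi of the other vertices of e, exactly one of the k^r local colourings
  of e makes e block the colour l at i.\<close>
lemma pmf_blocked_colour:
  assumes "finite e" "card e = r" "i \<in> e" "\<And>u. phi u \<in> {1..k}" "l \<in> {1..k}"
  shows "pmf (map_pmf (blocked_colour phi i e) (pmf_of_set (e \<rightarrow>\<^sub>E {1..k}))) l = 1 / real k ^ r"
proof -
  define x0 where "x0 = (\<lambda>u\<in>e. if u = i then l else phi u)"
  have x0: "x0 \<in> e \<rightarrow>\<^sub>E {1..k}"
    using assms(4,5) by (auto simp: x0_def)
  have "(e \<rightarrow>\<^sub>E {1..k}) \<inter> blocked_colour phi i e -` {l} = {x0}"
  proof (intro equalityI subsetI)
    fix x
    assume x: "x \<in> (e \<rightarrow>\<^sub>E {1..k}) \<inter> blocked_colour phi i e -` {l}"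
    then have "\<forall>u\<in>e - {i}. phi u = x u" "x i = l"
      using assms(5) by (auto simp: blocked_colour_def split: if_splits)
    with x have "x = x0"
      by (auto simp: x0_def PiE_def extensional_def)
    then show "x \<in> {x0}" by simp
  next
    fix x
    assume "x \<in> {x0}"
    then show "x \<in> (e \<rightarrow>\<^sub>E {1..k}) \<inter> blocked_colour phi i e -` {l}"
      using x0 assms(3) by (auto simp: blocked_colour_def x0_def)
  qed
  moreover have "card (e \<rightarrow>\<^sub>E {1..k}) = k ^ r"
    using assms by (simp add: card_PiE)
  moreover have "e \<rightarrow>\<^sub>E {1..k} \<noteq> {}" "finite (e \<rightarrow>\<^sub>E {1..k})"
    using x0 assms(1) by (auto simp: finite_PiE)
  ultimately show ?thesis
    by (simp add: pmf_map measure_pmf_of_set)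
qed

text \<open>Every back edge of Suc i contains Suc i, so the colours of 0..i only depend on the
  local partition outside the back edges; given that, the blocked colours of the back edges are
  independent.\<close>
lemma blocked_colours_distribution:
  fixes i :: nat
  assumes "finite E" "\<And>e. e \<in> E \<Longrightarrow> finite e" "0 < k"
  defines "B \<equiv> back_edges E (Suc i)" and "U \<equiv> \<lambda>e. pmf_of_set (e \<rightarrow>\<^sub>E {1..k})"
  shows "map_pmf (\<lambda>c e. if e \<in> B then blocked_colour (greedy_phi E k c i) (Suc i) e (c e) else 0)
           (random_local_partition E k)
       = bind_pmf (Pi_pmf (E - B) undefined U)
           (\<lambda>f. Pi_pmf B 0 (\<lambda>e. map_pmf (blocked_colour (greedy_phi E k f i) (Suc i) e) (U e)))"
proof -
  let ?merge = "\<lambda>f g e. if e \<in> E - B then f e else g e"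
  let ?blocked = "\<lambda>phi g e. if e \<in> B then blocked_colour phi (Suc i) e (g e) else 0"
  have fin: "finite (E - B)" "finite B"
    using assms(1) by (auto simp: B_def back_edges_def)
  have "random_local_partition E k = Pi_pmf ((E - B) \<union> B) undefined U"
    using random_local_partition_eq_Pi_pmf[OF assms(1-3)] by (auto simp: U_def B_def back_edges_def Un_absorb2)
  also have "\<dots> = map_pmf (\<lambda>(f, g). ?merge f g) (pair_pmf (Pi_pmf (E - B) undefined U) (Pi_pmf B undefined U))"
    using fin by (intro Pi_pmf_union) auto
  finally have "map_pmf (\<lambda>c. ?blocked (greedy_phi E k c i) c) (random_local_partition E k) =
      bind_pmf (Pi_pmf (E - B) undefined U)
        (\<lambda>f. map_pmf (\<lambda>g. ?blocked (greedy_phi E k (?merge f g) i) (?merge f g)) (Pi_pmf B undefined U))"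
    by (simp only: map_pmf_pair_pmf case_prod_conv map_bind_pmf map_pmf_comp)
  also have "\<dots> = bind_pmf (Pi_pmf (E - B) undefined U)
      (\<lambda>f. map_pmf (?blocked (greedy_phi E k f i)) (Pi_pmf B undefined U))"
  proof (intro bind_pmf_cong refl map_pmf_cong ext)
    fix f g e
    have "greedy_phi E k (?merge f g) i = greedy_phi E k f i"
      by (rule greedy_phi_cong) (auto simp: B_def back_edges_def)
    then show "?blocked (greedy_phi E k (?merge f g) i) (?merge f g) e = ?blocked (greedy_phi E k f i) g e"
      by simp
  qed
  also have "\<dots> = bind_pmf (Pi_pmf (E - B) undefined U)
      (\<lambda>f. Pi_pmf B 0 (\<lambda>e. map_pmf (blocked_colour (greedy_phi E k f i) (Suc i) e) (U e)))"
    using fin by (simp add: Pi_pmf_map_family[where dflt'=undefined])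
  finally show ?thesis .
qed

lemma measure_greedy_L_Suc:
  fixes i :: nat
  assumes "finite E" "\<And>e. e \<in> E \<Longrightarrow> finite e" "0 < k"
  defines "B \<equiv> back_edges E (Suc i)" and "U \<equiv> \<lambda>e. pmf_of_set (e \<rightarrow>\<^sub>E {1..k})"
  shows "measure_pmf.prob (random_local_partition E k) {c. P (greedy_L E k c (Suc i))} =
    measure_pmf.prob (bind_pmf (Pi_pmf (E - B) undefined U)
        (\<lambda>f. Pi_pmf B 0 (\<lambda>e. map_pmf (blocked_colour (greedy_phi E k f i) (Suc i) e) (U e))))
      {w. P ({1..k} - w ` B)}"
proof -
  let ?blocked = "\<lambda>c e. if e \<in> B then blocked_colour (greedy_phi E k c i) (Suc i) e (c e) else 0"
  have "{c. P (greedy_L E k c (Suc i))} = ?blocked -` {w. P ({1..k} - w ` B)}"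
    by (simp add: greedy_L_Suc B_def cong: image_cong)
  then have "measure_pmf.prob (random_local_partition E k) {c. P (greedy_L E k c (Suc i))} =
      measure_pmf.prob (map_pmf ?blocked (random_local_partition E k)) {w. P ({1..k} - w ` B)}"
    by simp
  also have "map_pmf ?blocked (random_local_partition E k) =
      bind_pmf (Pi_pmf (E - B) undefined U)
        (\<lambda>f. Pi_pmf B 0 (\<lambda>e. map_pmf (blocked_colour (greedy_phi E k f i) (Suc i) e) (U e)))"
    unfolding B_def U_def by (rule blocked_colours_distribution[OF assms(1-3)])
  finally show ?thesis .
qed

lemma pmf_blocked_colour_back_edge:
  assumes "r_uniform_hypergraph n r E" "0 < k" "e \<in> back_edges E (Suc i)" "l \<in> {1..k}"
  shows "pmf (map_pmf (blocked_colour (greedy_phi E k f i) (Suc i) e) (pmf_of_set (e \<rightarrow>\<^sub>E {1..k}))) l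
           = 1 / real k ^ r"
  using assms r_uniform_hypergraph_finite[OF assms(1)]
  by (intro pmf_blocked_colour greedy_phi_in_colours)
     (auto simp: back_edges_def r_uniform_hypergraph_def)

lemma prob_in_greedy_L_Suc:
  assumes "r_uniform_hypergraph n r E" "0 < k" "j \<in> {1..k}"
  shows "measure_pmf.prob (random_local_partition E k) {c. j \<in> greedy_L E k c (Suc i)}
           = (1 - 1 / real k ^ r) ^ back_degree E (Suc i)"
proof -
  let ?B = "back_edges E (Suc i)"
  let ?U = "\<lambda>e. pmf_of_set (e \<rightarrow>\<^sub>E {1..k})"
  let ?D = "\<lambda>f e. map_pmf (blocked_colour (greedy_phi E k f i) (Suc i) e) (?U e)"
  note fin = r_uniform_hypergraph_finite[OF assms(1)]
  have "finite ?B"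
    using fin by (simp add: back_edges_def)
  have "measure_pmf.prob (random_local_partition E k) {c. j \<in> greedy_L E k c (Suc i)} =
      measure_pmf.prob (bind_pmf (Pi_pmf (E - ?B) undefined ?U) (\<lambda>f. Pi_pmf ?B 0 (?D f)))
        {w. j \<in> {1..k} - w ` ?B}"
    by (rule measure_greedy_L_Suc[OF fin assms(2)])
  also have "\<dots> = (1 - 1 / real k ^ r) ^ back_degree E (Suc i)"
  proof (rule measure_bind_pmf_const)
    fix f
    have "{w. j \<in> {1..k} - w ` ?B} = {w. {} \<subseteq> w ` ?B \<and> {j} \<inter> w ` ?B = {}}"
      using assms(3) by auto
    then show "measure_pmf.prob (Pi_pmf ?B 0 (?D f)) {w. j \<in> {1..k} - w ` ?B} =
        (1 - 1 / real k ^ r) ^ back_degree E (Suc i)"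
      using hit_miss_prob_miss_one[OF \<open>finite ?B\<close> pmf_blocked_colour_back_edge[OF assms(1,2) _ assms(3)]]
      by (simp add: hit_miss_prob_def back_degree_eq_card)
  qed
  finally show ?thesis .
qed

lemma prob_none_in_greedy_L_Suc_le:
  assumes "r_uniform_hypergraph n r E" "0 < k" "J \<subseteq> {1..k}"
  shows "measure_pmf.prob (random_local_partition E k) {c. \<forall>j\<in>J. j \<notin> greedy_L E k c (Suc i)}
           \<le> (1 - (1 - 1 / real k ^ r) ^ back_degree E (Suc i)) ^ card J"
proof -
  let ?B = "back_edges E (Suc i)"
  let ?U = "\<lambda>e. pmf_of_set (e \<rightarrow>\<^sub>E {1..k})"
  let ?D = "\<lambda>f e. map_pmf (blocked_colour (greedy_phi E k f i) (Suc i) e) (?U e)"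
  let ?q = "1 - (1 - 1 / real k ^ r) ^ back_degree E (Suc i)"
  note fin = r_uniform_hypergraph_finite[OF assms(1)]
  have "finite ?B" "finite J"
    using fin assms(3) finite_subset by (auto simp: back_edges_def)
  have mass: "pmf (?D f e) l = 1 / real k ^ r" if "e \<in> ?B" "l \<in> J" for f e l
    using pmf_blocked_colour_back_edge assms that by blast
  have "hit_miss_prob ?B 0 (?D f) J {} \<le> ?q ^ card J" for f
  proof -
    have "hit_miss_prob ?B 0 (?D f) J {} \<le> (\<Prod>j\<in>J. hit_miss_prob ?B 0 (?D f) {j} {})"
      using mass by (intro hit_miss_prob_negatively_correlated[OF \<open>finite ?B\<close> \<open>finite J\<close>])
    also have "\<dots> = (\<Prod>j\<in>J. ?q)"
    proof (intro prod.cong refl)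
      fix j
      assume "j \<in> J"
      then show "hit_miss_prob ?B 0 (?D f) {j} {} = ?q"
        using hit_miss_prob_hit_one[OF \<open>finite ?B\<close> mass] by (simp add: back_degree_eq_card)
    qed
    finally show ?thesis by simp
  qed
  moreover have "{w. J \<inter> ({1..k} - w ` ?B) = {}} = {w. J \<subseteq> w ` ?B \<and> {} \<inter> w ` ?B = {}}"
    using assms(3) by auto
  ultimately have "measure_pmf.prob (bind_pmf (Pi_pmf (E - ?B) undefined ?U) (\<lambda>f. Pi_pmf ?B 0 (?D f)))
      {w. J \<inter> ({1..k} - w ` ?B) = {}} \<le> ?q ^ card J"
    by (intro measure_bind_pmf_le) (simp add: hit_miss_prob_def)
  moreover have "{c. \<forall>j\<in>J. j \<notin> greedy_L E k c (Suc i)} = {c. J \<inter> greedy_L E k c (Suc i) = {}}"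
    by auto
  ultimately show ?thesis
    using measure_greedy_L_Suc[OF fin assms(2), of "\<lambda>L. J \<inter> L = {}" i] by simp
qed

lemma prob_in_greedy_L_ge:
  assumes "r_uniform_hypergraph n r E" "degeneracy_ordering n E d" "0 < k" "i < n" "j \<in> {1..k}"
  shows "(1 - 1 / real k ^ r) ^ d \<le> measure_pmf.prob (random_local_partition E k) {c. j \<in> greedy_L E k c i}"
proof (cases i)
  case 0
  have "(1 - 1 / real k ^ r) ^ d \<le> 1"
    using assms(3) by (intro power_le_one) (auto simp: one_le_power)
  then show ?thesis
    using assms(5) 0 by (simp add: greedy_L_def)
next
  case (Suc i')
  have "back_degree E i \<le> d"
    using assms(2,4) by (simp add: degeneracy_ordering_def)
  then have "(1 - 1 / real k ^ r) ^ d \<le> (1 - 1 / real k ^ r) ^ back_degree E i"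
    using assms(3) by (intro power_decreasing) (auto simp: one_le_power)
  then show ?thesis
    using prob_in_greedy_L_Suc[OF assms(1,3,5)] Suc by simp
qed

lemma prob_none_in_greedy_L_le_prod:
  assumes "r_uniform_hypergraph n r E" "0 < k" "J \<subseteq> {1..k}"
  shows "measure_pmf.prob (random_local_partition E k) {c. \<forall>j\<in>J. j \<notin> greedy_L E k c i}
           \<le> (\<Prod>j\<in>J. measure_pmf.prob (random_local_partition E k) {c. j \<notin> greedy_L E k c i})"
proof (cases i)
  case 0
  then have "{c. \<forall>j\<in>J. j \<notin> greedy_L E k c i} = (if J = {} then UNIV else {})"
    using assms(3) by (auto simp: greedy_L_def subset_iff)
  then show ?thesis
    by (simp add: prod_nonneg)
next
  case (Suc i')
  let ?M = "random_local_partition E k"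
  let ?q = "1 - (1 - 1 / real k ^ r) ^ back_degree E i"
  have "measure_pmf.prob ?M {c. j \<notin> greedy_L E k c i} = ?q" if "j \<in> J" for j
    using measure_pmf.prob_compl[of "{c. j \<in> greedy_L E k c i}" ?M]
      prob_in_greedy_L_Suc[OF assms(1,2), of j i'] that assms(3) Suc
    by (auto simp: Compl_eq_Diff_UNIV[symmetric] Collect_neg_eq[symmetric])
  then have "(\<Prod>j\<in>J. measure_pmf.prob ?M {c. j \<notin> greedy_L E k c i}) = ?q ^ card J"
    by simp
  then show ?thesis
    using prob_none_in_greedy_L_Suc_le[OF assms, of i'] Suc by simp
qed

theorem lemma3p5:
  fixes n r d k :: nat and E :: "nat set set"
  assumes "r_uniform_hypergraph n r E"
    and "degeneracy_ordering n E d"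
    and "0 < k"
  shows "(\<forall>i<n. \<forall>j\<in>{1..k}.
            measure_pmf.expectation (random_local_partition E k)
              (\<lambda>c. if j \<in> greedy_L E k c i then 1 else 0 :: real)
            \<ge> (1 - 1 / real k ^ r) ^ d)
       \<and> (\<forall>i<n. \<forall>J. J \<subseteq> {1..k} \<longrightarrow>
            measure_pmf.prob (random_local_partition E k) {c. \<forall>j\<in>J. j \<notin> greedy_L E k c i}
            \<le> (\<Prod>j\<in>J. measure_pmf.prob (random_local_partition E k) {c. j \<notin> greedy_L E k c i}))"
proof -
  have "(\<lambda>c. if j \<in> greedy_L E k c i then 1 else 0 :: real) = indicator {c. j \<in> greedy_L E k c i}"
    for i j by (auto simp: indicator_def)
  then show ?thesis
    using prob_in_greedy_L_ge[OF assms] prob_none_in_greedy_L_le_prod[OF assms(1,3)] by simp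
qed

end
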